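(* Let $k\ge 1$ and let $\mathcal{M}=\{q_1,\dots,q_k\}$ be a finite set of prime numbers (the prime $2$ is allowed). Then there exists $n_{\mathcal{M}}\in\mathbb{N}$ such that for every integer $N\ge n_{\mathcal{M}}$ there exists a sequence of $N$ consecutive integers $a,a+1,\dots,a+N-1$ such that none of them is relatively prime to the product of all the others. Moreover, for each member $x$ of the sequence, the greatest common divisor of $x$ and the product of all the other members is divisible by some prime $p$ with $p\notin\mathcal{M}$. *)

theory Defs
  imports "HOL-Computational_Algebra.Primes"
begin

end

theory Submission
  imports Defs "HOL-Number_Theory.Number_Theory" "HOL-Library.FuncSet" "HOL-Real_Asymp.Real_Asymp"
begin

text \<open>
  Write the block as \<open>a + t\<close>, \<open>-K \<le> t \<le> L\<close>, with \<open>L \<le> K \<le> L + 1\<close>. It suffices that every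
  \<open>a + t\<close> has a prime factor \<open>p \<notin> M\<close> such that \<open>t - p\<close> or \<open>t + p\<close> is again an offset.
  Let every prime \<open>p \<notin> M\<close> up to \<open>K\<close> divide \<open>a\<close>: this handles each offset that has a prime
  factor outside \<open>M\<close>. The remaining nonzero offsets are \<open>M\<close>-smooth, so there are only
  \<open>O((log K)\<^bsup>|M|\<^esup>)\<close> of them; each gets instead a private prime \<open>d \<in> (K/2, K]\<close> through
  \<open>a \<equiv> -t (mod d)\<close>, and the offsets \<open>\<plusminus>d\<close>, whose factor \<open>d\<close> no longer divides \<open>a\<close>, get private
  primes \<open>q \<in> (K, L + d]\<close> in the same way. The Chinese remainder theorem produces \<open>a\<close>, and
  enough such primes exist because Chebyshev's elementary estimates give \<open>\<gg> n / log n\<close>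
  primes in \<open>(n, 29n/20]\<close>.
\<close>

subsection \<open>Chebyshev's estimates\<close>

lemma ln_fact_conv_sum_mangoldt:
  "ln (fact n :: real) = (\<Sum>m\<le>n. mangoldt m * real (n div m))"
proof (induction n)
  case 0
  then show ?case by simp
next
  case (Suc n)
  have "real (Suc n div m) = real (n div m) + (if m dvd Suc n then 1 else 0)" if "m > 0" for m
    using that by (auto simp: div_Suc dvd_eq_mod_eq_0)
  then have "mangoldt m * real (Suc n div m) = mangoldt m * real (n div m) + (if m dvd Suc n then mangoldt m else 0)"
    for m :: nat
    by (cases "m = 0") (auto simp: algebra_simps)
  then have "(\<Sum>m\<le>Suc n. mangoldt m * real (Suc n div m)) =
        (\<Sum>m\<le>Suc n. mangoldt m * real (n div m) + (if m dvd Suc n then mangoldt m else 0))"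
    by simp
  also have "\<dots> = (\<Sum>m\<le>n. mangoldt m * real (n div m)) + (\<Sum>m\<le>Suc n. if m dvd Suc n then mangoldt m else 0)"
    by (simp add: sum.distrib sum.atMost_Suc)
  also have "(\<Sum>m\<le>Suc n. if m dvd Suc n then mangoldt m else 0) = (\<Sum>d | d dvd Suc n. mangoldt d :: real)"
    by (subst sum.inter_filter[symmetric]) (auto intro!: sum.cong dest: dvd_imp_le)
  also have "\<dots> = ln (real (Suc n))"
    using mangoldt_sum[of "Suc n", where 'a=real] by simp
  finally show ?case
    using Suc by (simp add: ln_mult add.commute)
qed

lemma ln_fact_div_conv_sum_mangoldt:
  assumes "d > 0"
  shows "ln (fact (n div d) :: real) = (\<Sum>m\<le>n. mangoldt m * real (n div m div d))"
proof -
  have "ln (fact (n div d) :: real) = (\<Sum>m\<le>n div d. mangoldt m * real (n div d div m))"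
    by (rule ln_fact_conv_sum_mangoldt)
  also have "\<dots> = (\<Sum>m\<le>n. mangoldt m * real (n div d div m))"
    by (rule sum.mono_neutral_left) (auto intro: le_trans[OF _ div_le_dividend] intro!: div_less)
  also have "\<dots> = (\<Sum>m\<le>n. mangoldt m * real (n div m div d))"
    by (simp add: div_mult2_eq[symmetric] mult.commute)
  finally show ?thesis .
qed

definition primes_psi :: "nat \<Rightarrow> real" where
  "primes_psi n = (\<Sum>m\<le>n. mangoldt m)"

lemma primes_psi_mono: "m \<le> n \<Longrightarrow> primes_psi m \<le> primes_psi n"
  unfolding primes_psi_def by (rule sum_mono2) (auto simp: mangoldt_nonneg)

text \<open>
  Chebyshev's weight is \<open>0\<close> or \<open>1\<close>, and \<open>1\<close> on \<open>1..5\<close>; hence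
  \<open>\<psi>(n) - \<psi>(n/6) \<le> ln (n! (n/30)! / ((n/2)! (n/3)! (n/5)!)) \<le> \<psi>(n)\<close>, while Stirling's formula
  makes the middle term \<open>\<approx> chebyshev_A * n\<close> with \<open>chebyshev_A \<approx> 0.92\<close>.
\<close>

definition chebyshev_weight :: "nat \<Rightarrow> int" where
  "chebyshev_weight j = int j - int (j div 2) - int (j div 3) - int (j div 5) + int (j div 30)"

definition chebyshev_T :: "nat \<Rightarrow> real" where
  "chebyshev_T n = ln (fact n) - ln (fact (n div 2)) - ln (fact (n div 3)) - ln (fact (n div 5))
     + ln (fact (n div 30))"

definition chebyshev_A :: real where
  "chebyshev_A = ln 2 / 2 + ln 3 / 3 + ln 5 / 5 - ln 30 / 30"

lemma chebyshev_weight_mod_30: "chebyshev_weight (j mod 30) = chebyshev_weight j"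
proof -
  obtain q r where j: "j = 30 * q + r" and "r < 30"
    using div_mod_decomp[of j 30] by (metis mod_less_divisor zero_less_numeral mult.commute)
  then have "j mod 30 = r" by simp
  moreover have "(30 * q + r) div 2 = 15 * q + r div 2" "(30 * q + r) div 3 = 10 * q + r div 3"
    "(30 * q + r) div 5 = 6 * q + r div 5" "(30 * q + r) div 30 = q + r div 30"
    by simp_all
  ultimately show ?thesis
    unfolding j chebyshev_weight_def by simp
qed

lemma chebyshev_weight_below_30:
  assumes "r < 30"
  shows "chebyshev_weight r \<in> {0, 1} \<and> (1 \<le> r \<and> r \<le> 5 \<longrightarrow> chebyshev_weight r = 1)"
proof -
  have "\<forall>r\<in>set [0..<30]. chebyshev_weight r \<in> {0, 1} \<and> (1 \<le> r \<and> r \<le> 5 \<longrightarrow> chebyshev_weight r = 1)"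
    by (simp add: chebyshev_weight_def upt_rec)
  then show ?thesis
    using assms by simp
qed

lemma chebyshev_weight_0_or_1: "chebyshev_weight j \<in> {0, 1}"
  using chebyshev_weight_below_30[of "j mod 30"] chebyshev_weight_mod_30[of j] by simp

lemma chebyshev_weight_eq_1: "1 \<le> j \<Longrightarrow> j \<le> 5 \<Longrightarrow> chebyshev_weight j = 1"
  using chebyshev_weight_below_30[of j] by simp

lemma chebyshev_T_conv_sum_mangoldt:
  "chebyshev_T n = (\<Sum>m\<le>n. mangoldt m * real_of_int (chebyshev_weight (n div m)))"
proof -
  have "chebyshev_T n = (\<Sum>m\<le>n. mangoldt m * real (n div m)) - (\<Sum>m\<le>n. mangoldt m * real (n div m div 2))
     - (\<Sum>m\<le>n. mangoldt m * real (n div m div 3)) - (\<Sum>m\<le>n. mangoldt m * real (n div m div 5))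
     + (\<Sum>m\<le>n. mangoldt m * real (n div m div 30))"
    unfolding chebyshev_T_def ln_fact_conv_sum_mangoldt[of n]
      ln_fact_div_conv_sum_mangoldt[of 2 n, simplified] ln_fact_div_conv_sum_mangoldt[of 3 n, simplified]
      ln_fact_div_conv_sum_mangoldt[of 5 n, simplified] ln_fact_div_conv_sum_mangoldt[of 30 n, simplified] ..
  also have "\<dots> = (\<Sum>m\<le>n. mangoldt m * real_of_int (chebyshev_weight (n div m)))"
    by (simp only: sum_subtractf[symmetric] sum.distrib[symmetric])
      (intro sum.cong refl, simp add: chebyshev_weight_def algebra_simps)
  finally show ?thesis .
qed

lemma chebyshev_T_le_primes_psi: "chebyshev_T n \<le> primes_psi n"
  unfolding chebyshev_T_conv_sum_mangoldt primes_psi_def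
proof (rule sum_mono)
  fix m
  show "mangoldt m * real_of_int (chebyshev_weight (n div m)) \<le> mangoldt m"
    using chebyshev_weight_0_or_1[of "n div m"] mangoldt_nonneg[of m] by auto
qed

lemma primes_psi_diff_le_chebyshev_T: "primes_psi n - primes_psi (n div 6) \<le> chebyshev_T n"
proof -
  have "primes_psi n - primes_psi (n div 6) = (\<Sum>m\<in>{..n} - {..n div 6}. mangoldt m)"
    unfolding primes_psi_def by (subst sum_diff) auto
  also have "\<dots> = (\<Sum>m\<in>{..n} - {..n div 6}. mangoldt m * real_of_int (chebyshev_weight (n div m)))"
  proof (intro sum.cong refl)
    fix m assume "m \<in> {..n} - {..n div 6}"
    then have "n div 6 < m" "m \<le> n" by auto
    then have "n < m * 6" "0 < m"
      using div_less_iff_less_mult[of 6 n m] by auto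
    then have "1 \<le> n div m" "n div m \<le> 5"
      using \<open>m \<le> n\<close> div_less_iff_less_mult[of m n 6] div_greater_zero_iff[of n m]
      by (auto simp: mult.commute)
    then show "mangoldt m = mangoldt m * real_of_int (chebyshev_weight (n div m))"
      by (simp add: chebyshev_weight_eq_1)
  qed
  also have "\<dots> \<le> chebyshev_T n"
    unfolding chebyshev_T_conv_sum_mangoldt
  proof (rule sum_mono2)
    fix m
    show "0 \<le> mangoldt m * real_of_int (chebyshev_weight (n div m))"
      using chebyshev_weight_0_or_1[of "n div m"] mangoldt_nonneg[of m] by auto
  qed auto
  finally show ?thesis .
qed


lemma chebyshev_A_ge_half: "chebyshev_A \<ge> 1/2"
proof -
  have "ln ((2::real) ^ 15 * 3 ^ 10 * 5 ^ 6 / 30) = ln ((2::real) ^ 15) + ln ((3::real) ^ 10) + ln ((5::real) ^ 6) - ln 30"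
    by (simp only: ln_mult ln_div) simp_all
  also have "\<dots> = 15 * ln 2 + 10 * ln 3 + 6 * ln 5 - ln 30"
    using ln_realpow[of "2::real" 15] ln_realpow[of "3::real" 10] ln_realpow[of "5::real" 6] by simp
  also have "\<dots> = 30 * chebyshev_A"
    by (simp add: chebyshev_A_def field_simps)
  finally have eq: "30 * chebyshev_A = ln ((2::real) ^ 15 * 3 ^ 10 * 5 ^ 6 / 30)" by simp
  have "exp (15::real) = exp 1 ^ 15"
    using exp_of_nat_mult[of 15 "1::real"] by simp
  also have "\<dots> \<le> 3 ^ 15"
    by (rule power_mono[OF exp_le]) simp
  also have "\<dots> \<le> (2::real) ^ 15 * 3 ^ 10 * 5 ^ 6 / 30"
    by simp
  finally have "15 \<le> ln ((2::real) ^ 15 * 3 ^ 10 * 5 ^ 6 / 30)"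
    by (subst ln_ge_iff) auto
  then show ?thesis
    using eq by simp
qed

lemma chebyshev_A_pos: "chebyshev_A > 0"
  using chebyshev_A_ge_half by simp

lemma ln_diff_le_div: "0 < a \<Longrightarrow> a \<le> b \<Longrightarrow> ln b - ln a \<le> (b - a) / a" for a b :: real
  using ln_le_minus_one[of "b / a"] by (simp add: ln_div diff_divide_distrib)

lemma div_le_ln_diff: "0 < a \<Longrightarrow> a \<le> b \<Longrightarrow> (b - a) / b \<le> ln b - ln a" for a b :: real
  using ln_le_minus_one[of "a / b"] by (simp add: ln_div diff_divide_distrib)

lemma ln_fact_bounds:
  assumes "n \<ge> 1"
  shows "real n * ln n - n \<le> ln (fact n) \<and> ln (fact n) \<le> real n * ln n - n + 1 + ln n"
  using assms
proof (induction n rule: dec_induct)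
  case base
  then show ?case by simp
next
  case (step n)
  have n: "real n \<ge> 1"
    using step by simp
  have "ln (real n + 1) - ln n \<le> 1 / n" "1 / (real n + 1) \<le> ln (real n + 1) - ln n"
    using ln_diff_le_div[of "real n" "real n + 1"] div_le_ln_diff[of "real n" "real n + 1"] n by simp_all
  then have "real n * (ln (real n + 1) - ln n) \<le> 1" "1 \<le> (real n + 1) * (ln (real n + 1) - ln n)"
    using n by (simp_all add: field_simps)
  moreover have "ln (fact (Suc n) :: real) = ln (fact n) + ln (real n + 1)"
    by (simp add: ln_mult add.commute)
  ultimately show ?case
    using step.IH by (simp add: algebra_simps)
qed

lemma ln_fact_approx:
  fixes y :: real
  assumes "1 \<le> m" "real m \<le> y" "y < real m + 1"
  shows "\<bar>ln (fact m) - (y * ln y - y)\<bar> \<le> ln y + 1"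
proof -
  have m: "real m \<ge> 1" and lny: "ln y \<ge> 0" and "ln m \<le> ln y"
    using assms by auto
  have "(y - m) / y \<le> ln y - ln m" "ln y - ln m \<le> (y - m) / m"
    using div_le_ln_diff[of "real m" y] ln_diff_le_div[of "real m" y] m assms by simp_all
  then have "y - m \<le> y * (ln y - ln m)" "m * (ln y - ln m) \<le> y - m"
    using m assms by (simp_all add: field_simps)
  moreover have "0 \<le> (y - m) * ln m" "(y - m) * ln y \<le> ln y"
    using assms m lny by (auto intro: mult_left_le_one_le)
  ultimately show ?thesis
    using ln_fact_bounds[OF assms(1)] \<open>ln m \<le> ln y\<close> by (simp add: abs_le_iff algebra_simps)
qed

lemma real_div_nat_bounds: "real (n div d) \<le> real n / real d \<and> real n / real d < real (n div d) + 1"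
  using floor_divide_of_nat_eq[of n d, where 'a=real] floor_correct[of "real n / real d"] by simp

lemma ln_fact_div_approx:
  assumes "d > 0" "n div d \<ge> 1"
  shows "\<bar>ln (fact (n div d)) - (real n / d * ln (real n / d) - real n / d)\<bar> \<le> ln n + 1"
proof -
  have "\<bar>ln (fact (n div d)) - (real n / d * ln (real n / d) - real n / d)\<bar> \<le> ln (real n / d) + 1"
    using real_div_nat_bounds[of n d] assms by (intro ln_fact_approx) auto
  also have "ln (real n / d) \<le> ln n"
  proof -
    have "n \<ge> d"
      using assms div_greater_zero_iff[of n d] by simp
    then have "real n / d \<le> real n" "0 < real n / d"
      using assms by (auto simp: field_simps)
    then show ?thesis by simp
  qed
  finally show ?thesis by simp
qed

lemma chebyshev_T_main_term:
  assumes "x > 0"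
  shows "(x * ln x - x) - (x/2 * ln (x/2) - x/2) - (x/3 * ln (x/3) - x/3) - (x/5 * ln (x/5) - x/5)
     + (x/30 * ln (x/30) - x/30) = chebyshev_A * x"
proof -
  have "ln (x/2) = ln x - ln 2" "ln (x/3) = ln x - ln 3" "ln (x/5) = ln x - ln 5" "ln (x/30) = ln x - ln 30"
    using assms by (simp_all add: ln_div)
  then show ?thesis
    unfolding chebyshev_A_def by (simp only:) (simp add: algebra_simps add_divide_distrib diff_divide_distrib)
qed

lemma chebyshev_T_approx:
  assumes "n \<ge> 30"
  shows "\<bar>chebyshev_T n - chebyshev_A * n\<bar> \<le> 5 * (ln n + 1)"
proof -
  define err where "err d = ln (fact (n div d)) - (real n / d * ln (real n / d) - real n / d)" for d :: nat
  have err: "\<bar>err d\<bar> \<le> ln n + 1" if "d \<in> {1, 2, 3, 5, 30}" for d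
    unfolding err_def
  proof (rule ln_fact_div_approx)
    have "n div 30 \<le> n div d"
      using that by (auto intro: div_le_mono2)
    then show "n div d \<ge> 1"
      using assms by simp
  qed (use that in auto)
  have "chebyshev_T n - chebyshev_A * n = err 1 - err 2 - err 3 - err 5 + err 30"
    using chebyshev_T_main_term[of "real n"] assms unfolding chebyshev_T_def err_def by simp
  then show ?thesis
    using err[of 1] err[of 2] err[of 3] err[of 5] err[of 30] by (simp add: abs_le_iff)
qed

lemma primes_psi_ge: "n \<ge> 30 \<Longrightarrow> primes_psi n \<ge> chebyshev_A * n - 5 * (ln n + 1)"
  using chebyshev_T_approx[of n] chebyshev_T_le_primes_psi[of n] by (simp add: abs_le_iff)

lemma primes_psi_le_recursive:
  "n \<ge> 30 \<Longrightarrow> primes_psi n \<le> chebyshev_A * n + 5 * (ln n + 1) + primes_psi (n div 6)"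
  using chebyshev_T_approx[of n] primes_psi_diff_le_chebyshev_T[of n] by (simp add: abs_le_iff)

lemma primes_psi_le_linear: "\<exists>B. \<forall>n. primes_psi n \<le> 3/2 * chebyshev_A * n + B"
proof -
  have "eventually (\<lambda>x::real. 5 * (ln x + 1) \<le> x / 8) at_top"
    by real_asymp
  then have "eventually (\<lambda>n::nat. 5 * (ln (real n) + 1) \<le> real n / 8) sequentially"
    using filterlim_real_sequentially eventually_compose_filterlim by blast
  then obtain n1 where n1: "\<And>n. n \<ge> n1 \<Longrightarrow> 5 * (ln (real n) + 1) \<le> real n / 8"
    by (auto simp: eventually_sequentially)
  define n0 where "n0 = max n1 30"
  have "primes_psi n \<le> 3/2 * chebyshev_A * n + primes_psi n0" for n
  proof (induction n rule: less_induct)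
    case (less n)
    show ?case
    proof (cases "n \<le> n0")
      case True
      then show ?thesis
        using primes_psi_mono[OF True] chebyshev_A_pos by (simp add: add_increasing)
    next
      case False
      then have "n \<ge> 30" "n \<ge> n1"
        unfolding n0_def by auto
      have "primes_psi n \<le> chebyshev_A * n + 5 * (ln n + 1) + primes_psi (n div 6)"
        using primes_psi_le_recursive[OF \<open>n \<ge> 30\<close>] .
      also have "\<dots> \<le> chebyshev_A * n + 5 * (ln n + 1) + (3/2 * chebyshev_A * real (n div 6) + primes_psi n0)"
        using less.IH[of "n div 6"] \<open>n \<ge> 30\<close> by simp
      also have "\<dots> \<le> chebyshev_A * n + 5 * (ln n + 1) + (chebyshev_A * n / 4 + primes_psi n0)"
        using real_div_nat_bounds[of n 6] chebyshev_A_pos by simp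
      also have "\<dots> \<le> chebyshev_A * n + n / 8 + (chebyshev_A * n / 4 + primes_psi n0)"
        using n1[OF \<open>n \<ge> n1\<close>] by simp
      also have "\<dots> \<le> 3/2 * chebyshev_A * n + primes_psi n0"
        using chebyshev_A_ge_half mult_right_mono[of 1 "2 * chebyshev_A" "real n"] by (simp add: field_simps)
      finally show ?thesis .
    qed
  qed
  then show ?thesis by blast
qed

lemma primes_psi_le: "\<exists>B. \<forall>n\<ge>30. primes_psi n \<le> 5/4 * chebyshev_A * n + 5 * ln n + B"
proof -
  obtain B where B: "\<And>n. primes_psi n \<le> 3/2 * chebyshev_A * n + B"
    using primes_psi_le_linear by blast
  have "primes_psi n \<le> 5/4 * chebyshev_A * n + 5 * ln n + (B + 5)" if "n \<ge> 30" for n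
  proof -
    have "primes_psi n \<le> chebyshev_A * n + 5 * (ln n + 1) + (3/2 * chebyshev_A * real (n div 6) + B)"
      using primes_psi_le_recursive[OF that] B[of "n div 6"] by simp
    also have "\<dots> \<le> chebyshev_A * n + 5 * (ln n + 1) + (chebyshev_A * n / 4 + B)"
      using real_div_nat_bounds[of n 6] chebyshev_A_pos by simp
    finally show ?thesis by simp
  qed
  then show ?thesis by blast
qed


subsection \<open>Primes in the intervals \<open>(n, 29n/20]\<close>\<close>

lemma primes_psi_diff: "n \<le> y \<Longrightarrow> primes_psi y - primes_psi n = (\<Sum>m\<in>{n<..y}. mangoldt m)"
proof -
  assume "n \<le> y"
  then have "{n<..y} = {..y} - {..n}" by auto
  then show ?thesis
    unfolding primes_psi_def using \<open>n \<le> y\<close> by (simp add: sum_diff)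
qed

lemma prime_power_exponent_unique:
  fixes p n y :: nat
  assumes "prime p" "y < 2 * n" "n < p ^ i" "p ^ i \<le> y" "n < p ^ j" "p ^ j \<le> y"
  shows "i = j"
proof -
  have False if "k < l" "n < p ^ k" "p ^ l \<le> y" for k l
  proof -
    have "2 * p ^ k \<le> p ^ Suc k"
      using prime_ge_2_nat[OF assms(1)] by simp
    also have "\<dots> \<le> p ^ l"
      using that prime_gt_0_nat[OF assms(1)] by (intro power_increasing) auto
    finally show False
      using that assms(2) by linarith
  qed
  then show ?thesis
    using assms(3-6) by (metis linorder_neqE_nat)
qed

text \<open>Distinct proper prime powers in \<open>(n, 2n)\<close> have distinct bases, all at most \<open>\<surd>y\<close>.\<close>

lemma card_proper_primepow_le:
  assumes "y < 2 * n"
  shows "real (card {m\<in>{n<..y}. primepow m \<and> \<not> prime m}) \<le> sqrt (real y) + 1"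
proof -
  define PP where "PP = {m\<in>{n<..y}. primepow m \<and> \<not> prime m}"
  have proper: "\<exists>p k. prime p \<and> k \<ge> 2 \<and> m = p ^ k" if "m \<in> PP" for m
  proof -
    from that obtain p k where pk: "prime p" "k > 0" "m = p ^ k"
      unfolding PP_def primepow_def by auto
    then have "k \<noteq> 1"
      using that unfolding PP_def by auto
    then show ?thesis
      using pk by (intro exI[of _ p] exI[of _ k]) auto
  qed
  have "inj_on aprimedivisor PP"
  proof (rule inj_onI)
    fix m1 m2 assume m1: "m1 \<in> PP" and m2: "m2 \<in> PP" and eq: "aprimedivisor m1 = aprimedivisor m2"
    obtain p k1 k2 where p: "prime p" and m12: "m1 = p ^ k1" "m2 = p ^ k2"
      using proper[OF m1] proper[OF m2] eq by (auto simp: aprimedivisor_prime_power)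
    have "k1 = k2"
      using prime_power_exponent_unique[OF p assms] m1 m2 m12 unfolding PP_def by auto
    then show "m1 = m2"
      using m12 by simp
  qed
  moreover have "aprimedivisor ` PP \<subseteq> {..nat \<lfloor>sqrt (real y)\<rfloor>}"
  proof
    fix q assume "q \<in> aprimedivisor ` PP"
    then obtain m p k where m: "m \<in> PP" and pk: "prime p" "k \<ge> 2" "m = p ^ k" and "q = p"
      using proper by (force simp: aprimedivisor_prime_power)
    have "p ^ 2 \<le> p ^ k"
      using pk prime_gt_0_nat[of p] by (intro power_increasing) auto
    also have "\<dots> \<le> y"
      using m pk unfolding PP_def by auto
    finally have "real p ^ 2 \<le> real y"
      by (metis of_nat_le_iff of_nat_power)
    then have "real p \<le> sqrt (real y)"
      by (rule real_le_rsqrt)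
    then show "q \<in> {..nat \<lfloor>sqrt (real y)\<rfloor>}"
      using \<open>q = p\<close> by (simp add: le_nat_floor)
  qed
  ultimately have "card PP \<le> card {..nat \<lfloor>sqrt (real y)\<rfloor>}"
    by (metis card_image card_mono finite_atMost)
  moreover have "real (nat \<lfloor>sqrt (real y)\<rfloor>) \<le> sqrt (real y)"
    by simp
  ultimately show ?thesis
    unfolding PP_def by (simp only: card_atMost)
qed

lemma primes_psi_diff_le:
  assumes "y < 2 * n" "n \<le> y" "n \<ge> 1"
  shows "primes_psi y - primes_psi n \<le> (real (card {p. prime p \<and> n < p \<and> p \<le> y}) + sqrt (real y) + 1) * ln y"
proof -
  define P where "P = {p. prime p \<and> n < p \<and> p \<le> y}"
  define PP where "PP = {m\<in>{n<..y}. primepow m \<and> \<not> prime m}"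
  have "P \<union> PP \<subseteq> {n<..y}"
    unfolding P_def PP_def by auto
  have "primes_psi y - primes_psi n = (\<Sum>m\<in>{n<..y}. mangoldt m)"
    using primes_psi_diff assms by simp
  also have "\<dots> = (\<Sum>m\<in>P \<union> PP. mangoldt m)"
    using \<open>P \<union> PP \<subseteq> {n<..y}\<close>
    by (intro sum.mono_neutral_right) (auto simp: P_def PP_def mangoldt_def)
  also have "\<dots> \<le> (\<Sum>m\<in>P \<union> PP. ln (real y))"
    using \<open>P \<union> PP \<subseteq> {n<..y}\<close>
    by (intro sum_mono order.trans[OF mangoldt_le]) auto
  also have "\<dots> \<le> (real (card P) + real (card PP)) * ln (real y)"
    using card_Un_le[of P PP] assms by (simp add: mult_right_mono)
  also have "\<dots> \<le> (real (card P) + sqrt (real y) + 1) * ln (real y)"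
    using card_proper_primepow_le[OF assms(1)] assms unfolding PP_def by (intro mult_right_mono) auto
  finally show ?thesis
    unfolding P_def .
qed

lemma primes_psi_short_interval_ge:
  "\<exists>B. \<forall>n\<ge>100. real n / 10 - 10 * ln n - B \<le> primes_psi (29 * n div 20) - primes_psi n"
proof -
  obtain B where B: "\<And>n. n \<ge> 30 \<Longrightarrow> primes_psi n \<le> 5/4 * chebyshev_A * n + 5 * ln n + B"
    using primes_psi_le by blast
  have "real n / 10 - 10 * ln n - (B + 11) \<le> primes_psi (29 * n div 20) - primes_psi n" if "n \<ge> 100" for n
  proof -
    define y where "y = 29 * n div 20"
    have y: "29 * real n / 20 < real y + 1" "y \<ge> 30" "y \<le> 2 * n"
      using real_div_nat_bounds[of "29 * n" 20] that unfolding y_def by auto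
    have "ln y \<le> ln (2 * real n)"
      using y by simp
    also have "\<dots> = ln 2 + ln n"
      using that by (simp add: ln_mult)
    finally have "ln y \<le> ln 2 + ln n" .
    then have ln_y: "ln y \<le> ln n + 1"
      using ln_2_less_1 by linarith
    have "(real n / 5 - 1) / 2 \<le> chebyshev_A * (real n / 5 - 1)"
      using chebyshev_A_ge_half mult_right_mono[of "1/2" chebyshev_A "real n / 5 - 1"] that by simp
    also have "\<dots> \<le> chebyshev_A * (real y - 5/4 * real n)"
      using y chebyshev_A_pos by (intro mult_left_mono) auto
    finally have "real n / 10 - 1/2 \<le> chebyshev_A * real y - 5/4 * chebyshev_A * real n"
      by (simp add: algebra_simps diff_divide_distrib)
    then show ?thesis
      using primes_psi_ge[OF \<open>y \<ge> 30\<close>] B[of n] that ln_y unfolding y_def by simp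
  qed
  then show ?thesis by blast
qed

lemma eventually_card_primes_short_interval_ge:
  "eventually (\<lambda>n. real n / (11 * ln n) \<le> real (card {p. prime p \<and> n < p \<and> p \<le> 29 * n div 20})) sequentially"
proof -
  obtain B where B: "\<And>n. n \<ge> 100 \<Longrightarrow> real n / 10 - 10 * ln n - B \<le> primes_psi (29 * n div 20) - primes_psi n"
    using primes_psi_short_interval_ge by blast
  have "eventually (\<lambda>x::real. x / (11 * ln x) \<le> (x / 10 - 10 * ln x - B) / ln (2 * x) - sqrt (2 * x) - 1) at_top"
    "eventually (\<lambda>x::real. 0 \<le> x / 10 - 10 * ln x - B) at_top"
    by real_asymp+
  then have "eventually (\<lambda>x::real. x / (11 * ln x) \<le> (x / 10 - 10 * ln x - B) / ln (2 * x) - sqrt (2 * x) - 1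
      \<and> 0 \<le> x / 10 - 10 * ln x - B) at_top"
    by (rule eventually_conj)
  then have "eventually (\<lambda>n::nat. real n / (11 * ln n) \<le> (real n / 10 - 10 * ln n - B) / ln (2 * real n)
      - sqrt (2 * real n) - 1 \<and> 0 \<le> real n / 10 - 10 * ln n - B) sequentially"
    using filterlim_real_sequentially eventually_compose_filterlim by blast
  moreover have "eventually (\<lambda>n::nat. n \<ge> 100) sequentially"
    by (rule eventually_ge_at_top)
  ultimately show ?thesis
  proof eventually_elim
    case (elim n)
    define y where "y = 29 * n div 20"
    define G where "G = real n / 10 - 10 * ln n - B"
    define c where "c = real (card {p. prime p \<and> n < p \<and> p \<le> y})"
    have y: "y < 2 * n" "n \<le> y" "y \<ge> 100"
      using real_div_nat_bounds[of "29 * n" 20] elim unfolding y_def by auto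
    then have ln_y: "0 < ln y" "ln y \<le> ln (2 * real n)"
      by auto
    have "G \<le> (c + sqrt (real y) + 1) * ln y"
      using B[of n] primes_psi_diff_le[of y n] y elim unfolding G_def c_def y_def by simp
    then have "G / ln y \<le> c + sqrt (real y) + 1"
      using ln_y by (simp add: divide_le_eq)
    moreover have "G / ln (2 * real n) \<le> G / ln y"
      using elim ln_y unfolding G_def by (intro divide_left_mono) auto
    moreover have "sqrt (real y) \<le> sqrt (2 * real n)"
      using y by simp
    ultimately show ?case
      using elim unfolding c_def y_def G_def by linarith
  qed
qed


subsection \<open>Smooth numbers\<close>

definition smooth_over :: "nat set \<Rightarrow> int \<Rightarrow> bool" where
  "smooth_over M t \<longleftrightarrow> (\<forall>p. prime p \<longrightarrow> int p dvd t \<longrightarrow> p \<in> M)"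

lemma smooth_over_uminus [simp]: "smooth_over M (- t) = smooth_over M t"
  by (simp add: smooth_over_def)

lemma multiplicity_le_log2:
  assumes "prime (q :: nat)" "0 < t" "t \<le> int K"
  shows "real (multiplicity (int q) t) \<le> log 2 K"
proof (rule le_log_of_power)
  let ?e = "multiplicity (int q) t"
  have "2 ^ ?e \<le> int q ^ ?e"
    using prime_ge_2_nat[OF assms(1)] by (intro power_mono) auto
  also have "\<dots> \<le> t"
    using assms(2) by (intro zdvd_imp_le multiplicity_dvd)
  finally have "(2::int) ^ ?e \<le> int K"
    using assms(3) by linarith
  then show "2 ^ ?e \<le> real K"
    by (metis of_int_le_iff of_int_numeral of_int_power of_int_of_nat_eq)
qed simp

text \<open>A smooth number is determined by its exponents at the primes of \<open>M\<close>, each at most \<open>log\<^sub>2 K\<close>.\<close>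

lemma card_smooth_over_le:
  assumes M: "finite M" "\<forall>q\<in>M. prime q" and "K \<ge> 1"
  shows "real (card {t. 1 \<le> t \<and> t \<le> int K \<and> smooth_over M t}) \<le> (log 2 K + 1) ^ card M"
proof -
  define Sm where "Sm = {t. 1 \<le> t \<and> t \<le> int K \<and> smooth_over M t}"
  define E where "E = nat \<lfloor>log 2 K\<rfloor>"
  define h where "h t = restrict (\<lambda>q. multiplicity (int q) t) M" for t
  have "h ` Sm \<subseteq> PiE M (\<lambda>_. {..E})"
  proof (clarsimp simp: h_def)
    fix t q assume "t \<in> Sm" "q \<in> M"
    then have "real (multiplicity (int q) t) \<le> log 2 K"
      using M by (intro multiplicity_le_log2) (auto simp: Sm_def)
    then show "multiplicity (int q) t \<le> E"
      unfolding E_def by (simp add: le_nat_floor)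
  qed
  moreover have "inj_on h Sm"
  proof (rule inj_onI)
    fix t1 t2 assume t: "t1 \<in> Sm" "t2 \<in> Sm" and "h t1 = h t2"
    show "t1 = t2"
    proof (rule multiplicity_eq_int)
      show "t1 > 0" "t2 > 0"
        using t unfolding Sm_def by auto
      fix p :: int assume p: "prime p"
      then have p_nat: "int (nat p) = p" "prime (nat p)"
        by (auto simp: prime_ge_0_int prime_nat_iff_prime)
      show "multiplicity p t1 = multiplicity p t2"
      proof (cases "nat p \<in> M")
        case True
        then show ?thesis
          using fun_cong[OF \<open>h t1 = h t2\<close>, of "nat p"] unfolding h_def by (simp only: restrict_apply' p_nat(1))
      next
        case False
        then have "\<not> int (nat p) dvd t1" "\<not> int (nat p) dvd t2"
          using t p_nat(2) unfolding Sm_def smooth_over_def by blast+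
        then have "\<not> p dvd t1" "\<not> p dvd t2"
          using prime_ge_0_int[OF p] by simp_all
        then show ?thesis
          by (simp add: not_dvd_imp_multiplicity_0)
      qed
    qed
  qed
  ultimately have "card Sm \<le> card (PiE M (\<lambda>_. {..E}))"
    using M by (intro card_inj_on_le) (auto simp: finite_PiE)
  also have "\<dots> = (E + 1) ^ card M"
    using M by (simp add: card_PiE)
  finally have "real (card Sm) \<le> real (E + 1) ^ card M"
    by (metis of_nat_le_iff of_nat_power)
  also have "\<dots> \<le> (log 2 K + 1) ^ card M"
    using \<open>K \<ge> 1\<close> unfolding E_def by (intro power_mono) auto
  finally show ?thesis
    unfolding Sm_def .
qed

lemma card_le_twice_card_abs:
  fixes X :: "int set"
  assumes "finite X"
  shows "card X \<le> 2 * card (abs ` X)"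
proof -
  have "X \<subseteq> abs ` X \<union> uminus ` abs ` X"
  proof
    fix x assume "x \<in> X"
    then have "\<bar>x\<bar> \<in> abs ` X" by simp
    then show "x \<in> abs ` X \<union> uminus ` abs ` X"
      by (cases "x \<ge> 0") (auto intro: image_eqI[where x = "\<bar>x\<bar>"])
  qed
  then have "card X \<le> card (abs ` X \<union> uminus ` abs ` X)"
    using assms by (intro card_mono) auto
  also have "\<dots> \<le> card (abs ` X) + card (uminus ` abs ` X)"
    by (rule card_Un_le)
  also have "\<dots> \<le> 2 * card (abs ` X)"
    using card_image_le[of "abs ` X" uminus] assms by simp
  finally show ?thesis .
qed

lemma card_smooth_over_interval_le:
  assumes "L \<le> K"
  shows "card {t\<in>{- int K..int L}. t \<noteq> 0 \<and> smooth_over M t}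
    \<le> 2 * card {t. 1 \<le> t \<and> t \<le> int K \<and> smooth_over M t}"
proof -
  let ?S = "{t\<in>{- int K..int L}. t \<noteq> 0 \<and> smooth_over M t}"
  have "abs ` ?S \<subseteq> {t. 1 \<le> t \<and> t \<le> int K \<and> smooth_over M t}"
    using assms by (auto simp: abs_if)
  then have "card (abs ` ?S) \<le> card {t. 1 \<le> t \<and> t \<le> int K \<and> smooth_over M t}"
    by (intro card_mono) (auto intro: finite_subset[of _ "{1..int K}"])
  moreover have "card ?S \<le> 2 * card (abs ` ?S)"
    by (rule card_le_twice_card_abs) (auto intro: finite_subset[of _ "{- int K..int L}"])
  ultimately show ?thesis by linarith
qed


subsection \<open>Covering a block of offsets\<close>

lemma chinese_remainder_primes_int:
  fixes U :: "nat set" and r :: "nat \<Rightarrow> int"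
  assumes "finite U" "\<forall>p\<in>U. prime p"
  shows "\<exists>x::int. \<forall>p\<in>U. int p dvd x - r p"
proof -
  have "\<exists>x. \<forall>p\<in>U. [x = nat (r p mod int p)] (mod id p)"
    by (rule chinese_remainder_nat) (use assms in \<open>auto intro: primes_coprime\<close>)
  then obtain x where x: "\<forall>p\<in>U. [x = nat (r p mod int p)] (mod p)"
    by auto
  have "int p dvd int x - r p" if "p \<in> U" for p
  proof -
    have "int p > 0"
      using assms that prime_gt_0_nat by auto
    then have "int (nat (r p mod int p)) = r p mod int p"
      by simp
    moreover have "[int x = int (nat (r p mod int p))] (mod int p)"
      using x that by (simp only: cong_int_iff)
    ultimately have "[int x = r p] (mod int p)"
      by (metis cong_mod_right cong_refl cong_trans)
    then show ?thesis
      by (simp add: cong_iff_dvd_diff)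
  qed
  then show ?thesis by blast
qed

lemma exists_prime_factor_not_in:
  fixes D :: "nat set" and t :: int
  assumes "t \<noteq> 0" "\<not> smooth_over M t" "\<bar>t\<bar> \<le> int K" "\<forall>d\<in>D. K < 2 * d" "\<bar>t\<bar> \<notin> int ` D"
  shows "\<exists>p. prime p \<and> p \<notin> M \<and> p \<notin> D \<and> int p dvd t \<and> int p \<le> \<bar>t\<bar>"
proof -
  obtain p where p: "prime p" "int p dvd t" "p \<notin> M"
    using assms(2) unfolding smooth_over_def by auto
  have "int p \<le> \<bar>t\<bar>"
    using dvd_imp_le_int[OF assms(1) p(2)] by simp
  moreover have "p \<notin> D"
  proof
    assume "p \<in> D"
    obtain j where j: "t = int p * j"
      using p(2) by blast
    then have "\<bar>j\<bar> \<noteq> 1"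
      using assms(5) \<open>p \<in> D\<close> by (auto simp: abs_mult)
    then have "\<bar>j\<bar> \<ge> 2"
      using j assms(1) by (cases "j = 0") auto
    then have "\<bar>t\<bar> \<ge> 2 * int p"
      unfolding j abs_mult using mult_left_mono[of 2 "\<bar>j\<bar>" "int p"] by (simp add: mult.commute)
    then show False
      using assms(3,4) \<open>p \<in> D\<close> by fastforce
  qed
  ultimately show ?thesis
    using p by blast
qed

lemma shift_mem_interval:
  assumes "t \<in> {- int K..int L}" "L \<le> K" "K \<le> L + 1" "int p \<le> \<bar>t\<bar> + int L \<or> p \<le> K"
  shows "t - int p \<in> {- int K..int L} \<or> t + int p \<in> {- int K..int L}"
  using assms unfolding atLeastAtMost_iff by (cases "t \<ge> 0") (simp_all add: abs_if; linarith)+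

text \<open>The prime \<open>p0\<close> serves the offset \<open>0\<close>, whose neighbour \<open>0 + p0\<close> needs \<open>p0 \<le> L\<close>.\<close>

lemma covers_interval_if_congruences:
  fixes K L p0 :: nat and D :: "nat set"
  defines "I \<equiv> {- int K..int L}"
  assumes "L \<le> K" "K \<le> L + 1"
    and D: "\<forall>d\<in>D. prime d \<and> d \<notin> M \<and> K < 2 * d \<and> d \<le> K"
    and smooth: "\<forall>t\<in>I. t \<noteq> 0 \<longrightarrow> smooth_over M t \<longrightarrow> (\<exists>d\<in>D. int d dvd a + t)"
    and displaced: "\<forall>t\<in>I. \<bar>t\<bar> \<in> int ` D \<longrightarrow>
      (\<exists>q. prime q \<and> q \<notin> M \<and> int q \<le> \<bar>t\<bar> + int L \<and> int q dvd a + t)"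
    and other: "\<forall>p. prime p \<longrightarrow> p \<notin> M \<longrightarrow> p \<le> K \<longrightarrow> p \<notin> D \<longrightarrow> int p dvd a"
    and p0: "prime p0" "p0 \<notin> M" "p0 \<notin> D" "p0 \<le> L"
  assumes "t \<in> I"
  shows "\<exists>p. prime p \<and> p \<notin> M \<and> int p dvd a + t \<and> (t - int p \<in> I \<or> t + int p \<in> I)"
proof -
  note neighbour = shift_mem_interval[OF \<open>t \<in> I\<close>[unfolded I_def] \<open>L \<le> K\<close> \<open>K \<le> L + 1\<close>, folded I_def]
  consider "t \<noteq> 0" "smooth_over M t" | "\<bar>t\<bar> \<in> int ` D" | "t = 0"
    | "t \<noteq> 0" "\<not> smooth_over M t" "\<bar>t\<bar> \<notin> int ` D"
    by blast
  then show ?thesis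
  proof cases
    case 1
    then show ?thesis
      using smooth \<open>t \<in> I\<close> D neighbour by blast
  next
    case 2
    then show ?thesis
      using displaced \<open>t \<in> I\<close> neighbour by blast
  next
    case 3
    then show ?thesis
      using other p0 \<open>L \<le> K\<close> unfolding I_def by auto
  next
    case 4
    have "\<bar>t\<bar> \<le> int K"
      using \<open>t \<in> I\<close> \<open>L \<le> K\<close> unfolding I_def by auto
    with 4 obtain p where p: "prime p" "p \<notin> M" "p \<notin> D" "int p dvd t" "int p \<le> \<bar>t\<bar>"
      using exists_prime_factor_not_in[of t M K D] D by blast
    then have "int p dvd a + t"
      using other \<open>\<bar>t\<bar> \<le> int K\<close> by simp
    then show ?thesis
      using p neighbour[of p] by auto
  qed
qed

lemma exists_covering_shift:
  fixes K L p0 :: nat and M Dc Qc :: "nat set"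
  defines "I \<equiv> {- int K..int L}"
  assumes "L \<le> K" "K \<le> L + 1"
    and Dc: "finite Dc" "\<forall>d\<in>Dc. prime d \<and> d \<notin> M \<and> K < 2 * d \<and> d \<le> K"
      "card {t\<in>I. t \<noteq> 0 \<and> smooth_over M t} \<le> card Dc"
    and Qc: "finite Qc" "\<forall>q\<in>Qc. prime q \<and> q \<notin> M \<and> K < q \<and> (\<forall>d\<in>Dc. q \<le> L + d)"
      "2 * card {t\<in>I. t \<noteq> 0 \<and> smooth_over M t} \<le> card Qc"
    and p0: "prime p0" "p0 \<notin> M" "p0 \<notin> Dc" "p0 \<le> L"
  shows "\<exists>a. \<forall>t\<in>I. \<exists>p. prime p \<and> p \<notin> M \<and> int p dvd a + t \<and> (t - int p \<in> I \<or> t + int p \<in> I)"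
proof -
  define S where "S = {t\<in>I. t \<noteq> 0 \<and> smooth_over M t}"
  have "finite S"
    unfolding S_def by (rule finite_subset[of _ I]) (auto simp: I_def)
  then obtain dm where dm: "dm ` S \<subseteq> Dc" "inj_on dm S"
    using card_le_inj[OF _ Dc(1)] Dc(3) unfolding S_def by blast
  define D where "D = dm ` S"
  have "finite D" "card D = card S" "D \<subseteq> Dc"
    unfolding D_def using \<open>finite S\<close> dm by (auto simp: card_image)
  define E where "E = {t\<in>I. \<bar>t\<bar> \<in> int ` D}"
  have "finite E"
    unfolding E_def by (rule finite_subset[of _ I]) (auto simp: I_def)
  have "abs ` E \<subseteq> int ` D"
    unfolding E_def by auto
  then have "card (abs ` E) \<le> card D"
    using \<open>finite D\<close> card_mono[of "int ` D" "abs ` E"] card_image_le[of D int] by simp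
  then have "card E \<le> card Qc"
    using card_le_twice_card_abs[OF \<open>finite E\<close>] \<open>card D = card S\<close> Qc(3) unfolding S_def by linarith
  then obtain qm where qm: "qm ` E \<subseteq> Qc" "inj_on qm E"
    using card_le_inj[OF \<open>finite E\<close> Qc(1)] by blast
  define Q where "Q = qm ` E"
  have "Q \<subseteq> Qc" "finite Q"
    unfolding Q_def using qm(1) \<open>finite E\<close> by auto
  define P0 where "P0 = {p. prime p \<and> p \<notin> M \<and> p \<le> K \<and> p \<notin> D}"
  define r where "r p = (if p \<in> D then - inv_into S dm p else if p \<in> Q then - inv_into E qm p else 0)" for p
  have "finite (P0 \<union> D \<union> Q)"
    using finite_subset[of P0 "{..K}"] \<open>finite D\<close> \<open>finite Q\<close> unfolding P0_def by auto
  moreover have "\<forall>p\<in>P0 \<union> D \<union> Q. prime p"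
    using \<open>D \<subseteq> Dc\<close> Dc(2) \<open>Q \<subseteq> Qc\<close> Qc(2) unfolding P0_def by auto
  ultimately obtain a where a: "\<forall>p\<in>P0 \<union> D \<union> Q. int p dvd a - r p"
    using chinese_remainder_primes_int[of "P0 \<union> D \<union> Q" r] by blast
  have dvd_shift: "int p dvd a + t" if "p \<in> P0 \<union> D \<union> Q" "r p = - t" for p t
    using bspec[OF a that(1)] that(2) by simp
  have "int (dm t) dvd a + t" if "t \<in> S" for t
    using that dm(2) dvd_shift[of "dm t" t] unfolding r_def D_def by (simp add: inv_into_f_f)
  then have smooth: "\<forall>t\<in>I. t \<noteq> 0 \<longrightarrow> smooth_over M t \<longrightarrow> (\<exists>d\<in>D. int d dvd a + t)"
    unfolding S_def D_def by blast
  have "prime (qm t) \<and> qm t \<notin> M \<and> int (qm t) \<le> \<bar>t\<bar> + int L \<and> int (qm t) dvd a + t" if t: "t \<in> E" for t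
  proof -
    obtain d where "d \<in> D" "\<bar>t\<bar> = int d"
      using t unfolding E_def by auto
    have "qm t \<in> Qc" "qm t \<in> Q"
      using t qm(1) unfolding Q_def by auto
    moreover have "K < qm t" "\<forall>d\<in>Dc. qm t \<le> L + d"
      using \<open>qm t \<in> Qc\<close> Qc(2) by auto
    moreover have "d \<le> K" if "d \<in> D" for d
      using that \<open>D \<subseteq> Dc\<close> Dc(2) by auto
    ultimately have "qm t \<notin> D" "qm t \<le> L + d"
      using \<open>d \<in> D\<close> \<open>D \<subseteq> Dc\<close> by (auto simp: not_le[symmetric])
    then have "r (qm t) = - t"
      using t qm(2) \<open>qm t \<in> Q\<close> unfolding r_def by (simp add: inv_into_f_f)
    then show ?thesis
      using dvd_shift[of "qm t" t] \<open>qm t \<in> Qc\<close> \<open>qm t \<in> Q\<close> Qc(2) \<open>qm t \<le> L + d\<close> \<open>\<bar>t\<bar> = int d\<close> by auto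
  qed
  then have displaced: "\<forall>t\<in>I. \<bar>t\<bar> \<in> int ` D \<longrightarrow>
      (\<exists>q. prime q \<and> q \<notin> M \<and> int q \<le> \<bar>t\<bar> + int L \<and> int q dvd a + t)"
    unfolding E_def by blast
  have "\<forall>q\<in>Q. K < q"
    using \<open>Q \<subseteq> Qc\<close> Qc(2) by auto
  then have "p \<notin> Q" if "p \<le> K" for p
    using that by auto
  then have "int p dvd a" if "p \<in> P0" for p
    using that dvd_shift[of p 0] unfolding P0_def r_def by auto
  then have other: "\<forall>p. prime p \<longrightarrow> p \<notin> M \<longrightarrow> p \<le> K \<longrightarrow> p \<notin> D \<longrightarrow> int p dvd a"
    unfolding P0_def by blast
  have "\<forall>d\<in>D. prime d \<and> d \<notin> M \<and> K < 2 * d \<and> d \<le> K" "p0 \<notin> D"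
    using \<open>D \<subseteq> Dc\<close> Dc(2) p0(3) by auto
  then show ?thesis
    using covers_interval_if_congruences[OF \<open>L \<le> K\<close> \<open>K \<le> L + 1\<close> _ smooth[unfolded I_def]
        displaced[unfolded I_def] other p0(1,2) _ p0(4)]
    unfolding I_def by blast
qed

lemma card_primes_le_card_primes_not_in:
  fixes n y :: nat
  assumes "finite M"
  shows "card {p. prime p \<and> n < p \<and> p \<le> y} \<le> card {p. prime p \<and> p \<notin> M \<and> n < p \<and> p \<le> y} + card M"
proof -
  have "{p. prime p \<and> n < p \<and> p \<le> y} \<subseteq> {p. prime p \<and> p \<notin> M \<and> n < p \<and> p \<le> y} \<union> M"
    by auto
  moreover have "finite {p. prime p \<and> p \<notin> M \<and> n < p \<and> p \<le> y}"
    by (rule finite_subset[of _ "{..y}"]) auto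
  ultimately have "card {p. prime p \<and> n < p \<and> p \<le> y} \<le> card ({p. prime p \<and> p \<notin> M \<and> n < p \<and> p \<le> y} \<union> M)"
    using assms by (intro card_mono) auto
  then show ?thesis
    using card_Un_le order_trans by blast
qed

lemma eventually_card_primes_not_in_ge:
  assumes "finite M"
  shows "eventually (\<lambda>n. 4 * (log 2 (3 * real n) + 1) ^ card M
    \<le> real (card {p. prime p \<and> p \<notin> M \<and> n < p \<and> p \<le> 29 * n div 20})) sequentially"
proof -
  have "eventually (\<lambda>x::real. 4 * (log 2 (3 * x) + 1) ^ card M + card M \<le> x / (11 * ln x)) at_top"
    by real_asymp
  then have "eventually (\<lambda>n::nat. 4 * (log 2 (3 * real n) + 1) ^ card M + card M \<le> real n / (11 * ln n))
      sequentially"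
    using filterlim_real_sequentially eventually_compose_filterlim by blast
  then show ?thesis
    using eventually_card_primes_short_interval_ge
  proof eventually_elim
    case (elim n)
    then show ?case
      using card_primes_le_card_primes_not_in[OF assms, of n "29 * n div 20"] by linarith
  qed
qed

lemma exists_covering_shift_large:
  assumes "finite M" "\<forall>q\<in>M. prime q"
  shows "\<exists>K0. \<forall>K L. K0 \<le> K \<longrightarrow> L \<le> K \<longrightarrow> K \<le> L + 1 \<longrightarrow> (\<exists>a. \<forall>t\<in>{- int K..int L}.
           \<exists>p. prime p \<and> p \<notin> M \<and> int p dvd a + t \<and> (t - int p \<in> {- int K..int L} \<or> t + int p \<in> {- int K..int L}))"
proof -
  define cnt where "cnt n = card {p. prime p \<and> p \<notin> M \<and> n < p \<and> p \<le> 29 * n div 20}" for n :: nat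
  obtain n1 where n1: "\<And>n. n \<ge> n1 \<Longrightarrow> 4 * (log 2 (3 * real n) + 1) ^ card M \<le> real (cnt n)"
    using eventually_card_primes_not_in_ge[OF assms(1)] unfolding cnt_def eventually_sequentially by blast
  obtain p0 where p0: "prime p0" "p0 \<notin> M"
    using primes_infinite assms(1) by (metis Diff_iff finite_Diff2 infinite_imp_nonempty mem_Collect_eq ex_in_conv)
  have "\<exists>a. \<forall>t\<in>{- int K..int L}.
           \<exists>p. prime p \<and> p \<notin> M \<and> int p dvd a + t \<and> (t - int p \<in> {- int K..int L} \<or> t + int p \<in> {- int K..int L})"
    if K: "2 * (n1 + p0 + 100) \<le> K" "L \<le> K" "K \<le> L + 1" for K L
  proof -
    define m where "m = 20 * K div 29"
    define S where "S = {t\<in>{- int K..int L}. t \<noteq> 0 \<and> smooth_over M t}"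
    define bound where "bound = (log 2 K + 1) ^ card M"
    have m: "29 * m div 20 \<le> K" "K < 2 * m + 2" "n1 + p0 \<le> m" "K \<le> 3 * m" "29 * K div 20 \<le> L + m"
      using K unfolding m_def by auto
    have "card S \<le> 2 * card {t. 1 \<le> t \<and> t \<le> int K \<and> smooth_over M t}"
      unfolding S_def by (rule card_smooth_over_interval_le[OF K(2)])
    then have S_le: "real (card S) \<le> 2 * bound"
      using card_smooth_over_le[OF assms, of K] K unfolding bound_def by simp
    have cnt_ge: "4 * bound \<le> real (cnt n)" if "n1 \<le> n" "K \<le> 3 * n" for n
    proof -
      have "bound \<le> (log 2 (3 * real n) + 1) ^ card M"
        unfolding bound_def using that K by (intro power_mono) auto
      then show ?thesis
        using n1[OF that(1)] by linarith
    qed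
    have "4 * bound \<le> real (cnt m)" "4 * bound \<le> real (cnt K)"
      using cnt_ge m(3,4) K(1) by auto
    moreover have "0 \<le> bound"
      unfolding bound_def using K by simp
    ultimately have "real (card S) \<le> real (cnt m)" "real (2 * card S) \<le> real (cnt K)"
      using S_le by simp_all
    then have "card S \<le> cnt m" "2 * card S \<le> cnt K"
      by (simp_all only: of_nat_le_iff)
    show ?thesis
    proof (rule exists_covering_shift[OF K(2,3)])
      show "finite {d. prime d \<and> d \<notin> M \<and> m < d \<and> d \<le> 29 * m div 20}"
        "finite {q. prime q \<and> q \<notin> M \<and> K < q \<and> q \<le> 29 * K div 20}"
        by (auto intro: finite_subset[of _ "{..29 * K div 20}"])
      show "\<forall>d\<in>{d. prime d \<and> d \<notin> M \<and> m < d \<and> d \<le> 29 * m div 20}. prime d \<and> d \<notin> M \<and> K < 2 * d \<and> d \<le> K"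
        "\<forall>q\<in>{q. prime q \<and> q \<notin> M \<and> K < q \<and> q \<le> 29 * K div 20}. prime q \<and> q \<notin> M \<and> K < q \<and>
          (\<forall>d\<in>{d. prime d \<and> d \<notin> M \<and> m < d \<and> d \<le> 29 * m div 20}. q \<le> L + d)"
        using m by auto
      show "card {t\<in>{- int K..int L}. t \<noteq> 0 \<and> smooth_over M t}
          \<le> card {d. prime d \<and> d \<notin> M \<and> m < d \<and> d \<le> 29 * m div 20}"
        "2 * card {t\<in>{- int K..int L}. t \<noteq> 0 \<and> smooth_over M t}
          \<le> card {q. prime q \<and> q \<notin> M \<and> K < q \<and> q \<le> 29 * K div 20}"
        using \<open>card S \<le> cnt m\<close> \<open>2 * card S \<le> cnt K\<close> unfolding S_def cnt_def by auto
      show "prime p0" "p0 \<notin> M" "p0 \<notin> {d. prime d \<and> d \<notin> M \<and> m < d \<and> d \<le> 29 * m div 20}" "p0 \<le> L"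
        using p0 m K by auto
    qed
  qed
  then show ?thesis by blast
qed


subsection \<open>Blocks of consecutive integers\<close>

lemma exists_block_sharing_primes:
  assumes "finite M" "\<forall>q\<in>M. prime q"
  shows "\<exists>N0. \<forall>N\<ge>N0. \<exists>a::int. \<forall>i\<in>{0..<N}. \<exists>p. prime p \<and> p \<notin> M \<and>
           int p dvd a + int i \<and> (\<exists>j\<in>{0..<N} - {i}. int p dvd a + int j)"
proof -
  obtain K0 where K0: "\<And>K L. K0 \<le> K \<Longrightarrow> L \<le> K \<Longrightarrow> K \<le> L + 1 \<Longrightarrow> \<exists>a. \<forall>t\<in>{- int K..int L}.
      \<exists>p. prime p \<and> p \<notin> M \<and> int p dvd a + t \<and> (t - int p \<in> {- int K..int L} \<or> t + int p \<in> {- int K..int L})"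
    using exists_covering_shift_large[OF assms] by blast
  have "\<exists>a::int. \<forall>i\<in>{0..<N}. \<exists>p. prime p \<and> p \<notin> M \<and>
           int p dvd a + int i \<and> (\<exists>j\<in>{0..<N} - {i}. int p dvd a + int j)" if "N \<ge> 2 * K0 + 1" for N
  proof -
    define K where "K = N div 2"
    define L where "L = N - 1 - K"
    have "K0 \<le> K" "L \<le> K" "K \<le> L + 1" "N = K + L + 1"
      using that unfolding K_def L_def by auto
    then obtain a where a: "\<forall>t\<in>{- int K..int L}. \<exists>p. prime p \<and> p \<notin> M \<and> int p dvd a + t \<and>
        (t - int p \<in> {- int K..int L} \<or> t + int p \<in> {- int K..int L})"
      using K0 by blast
    have "\<exists>p. prime p \<and> p \<notin> M \<and> int p dvd (a - int K) + int i \<and>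
        (\<exists>j\<in>{0..<N} - {i}. int p dvd (a - int K) + int j)" if "i \<in> {0..<N}" for i
    proof -
      define t where "t = int i - int K"
      have "t \<in> {- int K..int L}"
        using \<open>i \<in> {0..<N}\<close> \<open>N = K + L + 1\<close> unfolding t_def by auto
      then obtain p where p: "prime p" "p \<notin> M" "int p dvd a + t"
        and nb: "t - int p \<in> {- int K..int L} \<or> t + int p \<in> {- int K..int L}"
        using a by blast
      define t' where "t' = (if t - int p \<in> {- int K..int L} then t - int p else t + int p)"
      have t': "t' \<in> {- int K..int L}" "t' \<noteq> t"
        using nb prime_gt_0_nat[OF p(1)] unfolding t'_def by auto
      have "int p dvd a + (t - int p)" "int p dvd a + (t + int p)"
        using p(3) dvd_add[OF p(3) dvd_refl[of "int p"]] by (simp_all add: algebra_simps)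
      then have "int p dvd a + t'"
        unfolding t'_def by simp
      define j where "j = nat (t' + int K)"
      have "j \<in> {0..<N} - {i}" "(a - int K) + int j = a + t'"
        using t' \<open>N = K + L + 1\<close> unfolding j_def t_def by auto
      moreover have "(a - int K) + int i = a + t"
        unfolding t_def by simp
      ultimately show ?thesis
        using p \<open>int p dvd a + t'\<close> by metis
    qed
    then show ?thesis by blast
  qed
  then show ?thesis by blast
qed

lemma prime_dvd_gcd_prod_others:
  fixes f :: "'a \<Rightarrow> int" and p :: nat
  assumes "finite A" "j \<in> A - {i}" "prime p" "int p dvd f i" "int p dvd f j"
  shows "int p dvd gcd (f i) (\<Prod>k\<in>A - {i}. f k)" "\<not> coprime (f i) (\<Prod>k\<in>A - {i}. f k)"
proof -
  show "int p dvd gcd (f i) (\<Prod>k\<in>A - {i}. f k)"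
    using assms by (auto intro: dvd_trans[OF _ dvd_prodI])
  moreover have "\<not> is_unit (int p)"
    using prime_gt_1_nat[OF assms(3)] by simp
  ultimately show "\<not> coprime (f i) (\<Prod>k\<in>A - {i}. f k)"
    using coprime_common_divisor dvd_gcdD1 dvd_gcdD2 by metis
qed

theorem theorem2p2:
  fixes M :: "nat set"
  assumes "finite M" and "M \<noteq> {}" and "\<forall>q\<in>M. prime q"
  shows "\<exists>n\<^sub>M::nat. \<forall>N\<ge>n\<^sub>M. \<exists>a::int.
           \<forall>i\<in>{0..<N}.
             \<not> coprime (a + int i) (\<Prod>j\<in>{0..<N} - {i}. a + int j) \<and>
             (\<exists>p::nat. prime p \<and> p \<notin> M \<and>
                int p dvd gcd (a + int i) (\<Prod>j\<in>{0..<N} - {i}. a + int j))"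
proof -
  obtain N0 where N0: "\<And>N. N \<ge> N0 \<Longrightarrow> \<exists>a::int. \<forall>i\<in>{0..<N}. \<exists>p. prime p \<and> p \<notin> M \<and>
      int p dvd a + int i \<and> (\<exists>j\<in>{0..<N} - {i}. int p dvd a + int j)"
    using exists_block_sharing_primes[OF assms(1,3)] by blast
  show ?thesis
  proof (intro exI[of _ N0] allI impI)
    fix N assume "N \<ge> N0"
    then obtain a :: int where a: "\<forall>i\<in>{0..<N}. \<exists>p. prime p \<and> p \<notin> M \<and>
        int p dvd a + int i \<and> (\<exists>j\<in>{0..<N} - {i}. int p dvd a + int j)"
      using N0 by blast
    show "\<exists>a::int. \<forall>i\<in>{0..<N}. \<not> coprime (a + int i) (\<Prod>j\<in>{0..<N} - {i}. a + int j) \<and>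
        (\<exists>p. prime p \<and> p \<notin> M \<and> int p dvd gcd (a + int i) (\<Prod>j\<in>{0..<N} - {i}. a + int j))"
    proof (intro exI ballI)
      fix i assume "i \<in> {0..<N}"
      then obtain p j where "prime p" "p \<notin> M" "j \<in> {0..<N} - {i}" "int p dvd a + int i" "int p dvd a + int j"
        using a by blast
      then show "\<not> coprime (a + int i) (\<Prod>j\<in>{0..<N} - {i}. a + int j) \<and>
          (\<exists>p. prime p \<and> p \<notin> M \<and> int p dvd gcd (a + int i) (\<Prod>j\<in>{0..<N} - {i}. a + int j))"
        using prime_dvd_gcd_prod_others[of "{0..<N}" j i p "\<lambda>k. a + int k"] by auto
    qed
  qed
qed

end
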